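(* Let $\{\boldsymbol y^{TSLP}_n\}_{n\in\mathcal T}$, $\{u^{TSLP}_n\}_{n\in\mathcal T\setminus\{1\}}$ be the values of the $\boldsymbol y$- and $u$-variables in an optimal solution of the linear programming relaxation of the two-stage model (integrality of $\boldsymbol x$ dropped). Define $\boldsymbol x^{MS}_1=\lceil\boldsymbol B_{t_1}\boldsymbol y^{TSLP}_1\rceil$, $\boldsymbol x^{MS}_n=\max_{m\in\mathcal P(n)}\lceil\boldsymbol B_{t_m}\boldsymbol y^{TSLP}_m\rceil-\max_{m\in\mathcal P(a(n))}\lceil\boldsymbol B_{t_m}\boldsymbol y^{TSLP}_m\rceil$ ($n\ne1$), $\eta^{MS}_n=\max_{m\in\mathcal C(n)}\{\boldsymbol f_{t_m}^{\mathsf T}\sum_{l\in\mathcal P(m)}\boldsymbol x^{MS}_l+\boldsymbol c_{t_m}^{\mathsf T}\boldsymbol y^{TSLP}_m-u^{TSLP}_m\}$ ($n\notin\mathcal L$), $\boldsymbol x^{TS}_1=\boldsymbol B_{t_1}\boldsymbol y^{TSLP}_1$, $\boldsymbol x^{TS}_n=\max_{m\in\mathcal P(n)}\max_{l\in\mathcal T_{t_m}}\boldsymbol B_{t_l}\boldsymbol y^{TSLP}_l-\max_{m\in\mathcal P(a(n))}\max_{l\in\mathcal T_{t_m}}\boldsymbol B_{t_l}\boldsymbol y^{TSLP}_l$ ($n\ne1$), $\eta^{TS}_n=\max_{m\in\mathcal C(n)}\{\boldsymbol f_{t_m}^{\mathsf T}\sum_{l\in\mathcal P(m)}\boldsymbol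 x^{TS}_l+\boldsymbol c_{t_m}^{\mathsf T}\boldsymbol y^{TSLP}_m-u^{TSLP}_m\}$ ($n\notin\mathcal L$). Then $$\mathrm{VMS}_R\ge\mathrm{VMS}_R^{LB1}:=\boldsymbol f_{t_1}^{\mathsf T}\big(\boldsymbol B_{t_1}\boldsymbol y^{TSLP}_1-\lceil\boldsymbol B_{t_1}\boldsymbol y^{TSLP}_1\rceil\big)+\sum_{n\in\mathcal T\setminus\{1\}}p_n(1-\lambda_{t_n})\boldsymbol f_{t_n}^{\mathsf T}\Big(\max_{m\in\mathcal P(n)}\max_{l\in\mathcal T_{t_m}}\boldsymbol B_{t_l}\boldsymbol y^{TSLP}_l-\max_{m\in\mathcal P(n)}\lceil\boldsymbol B_{t_m}\boldsymbol y^{TSLP}_m\rceil\Big)+\sum_{n\in\mathcal T\setminus\mathcal L}p_n\lambda_{t_n+1}\big(\eta^{TS}_n-\eta^{MS}_n\big).$$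
   Context: Setting. Fix integers $T\ge 2$ (periods), $M\ge1$ (facilities), $N\ge1$ (customer sites). For each period $t$: maintenance costs $f_{ti}\ge 0$ forming $\boldsymbol f_t\in\mathbb R^M$; operational costs $c_{tij}\ge0$ forming $\boldsymbol c_t\in\mathbb R^{MN}$; capacities $h_{ti}>0$. Vectors $\boldsymbol y\in\mathbb R^{MN}$ are indexed by pairs $(i,j)$; $(\boldsymbol A_t\boldsymbol y)_j=\sum_{i=1}^M y_{ij}$ defines $\boldsymbol A_t$ and $(\boldsymbol B_t\boldsymbol y)_i=\frac1{h_{ti}}\sum_{j=1}^N y_{ij}$ defines $\boldsymbol B_t$. Ceilings and maxima of vectors are componentwise. Scenario tree: a finite rooted tree with node set $\mathcal T$, root $1$, all root-to-leaf paths having $T$ nodes; $\mathcal T_t$ nodes at depth $t$, $t_n$ the period of $n$, $\mathcal L=\mathcal T_T$ the leaves, $a(n)$ the parent of $n\ne1$, $\mathcal C(n)$ the children of $n$, $\mathcal P(n)$ the nodes on the root-to-$n$ path (inclusive). Probabilities $p_n>0$ with $\sum_{n\in\mathcal T_t}p_n=1$ and $\sum_{m\in\mathcal C(n)}p_m=p_n$ ($n\notin\mathcal L$); demands $\boldsymbol d_n\in\mathbb R^N_{\ge0}$. Risk parameters $\lambda_t\in[0,1]$, $\alpha_t\in(0,1)$, $t=2,\ldots,T$. $\tilde{\boldsymbol f}_n=\boldsymbol f_{t_n}$ if $n=1$, else $(1-\lambda_{t_n})\boldsymbol f_{t_n}$; $\tilde{\boldsymbol c}_n=\boldsymbol c_{t_n}$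 if $n=1$, else $(1-\lambda_{t_n})\boldsymbol c_{t_n}$; $\tilde\lambda_n=0$ if $n\in\mathcal L$, else $\lambda_{t_n+1}$; $\tilde\alpha_n=0$ if $n=1$, else $\lambda_{t_n}/(1-\alpha_{t_n})$. Multistage model: $z^{MS}_R=\min\sum_{n\in\mathcal T}p_n\big(\tilde{\boldsymbol f}_n^{\mathsf T}\sum_{m\in\mathcal P(n)}\boldsymbol x_m+\tilde{\boldsymbol c}_n^{\mathsf T}\boldsymbol y_n+\tilde\lambda_n\eta_n+\tilde\alpha_nu_n\big)$ over $\boldsymbol x_n\in\mathbb Z^M_+$, $\boldsymbol y_n\in\mathbb R^{MN}_+$ ($n\in\mathcal T$), $\eta_n\in\mathbb R$ ($n\notin\mathcal L$), $u_n\ge0$ ($n\ne1$), subject to $\boldsymbol A_{t_n}\boldsymbol y_n=\boldsymbol d_n$, $\boldsymbol B_{t_n}\boldsymbol y_n\le\sum_{m\in\mathcal P(n)}\boldsymbol x_m$ ($n\in\mathcal T$) and $u_n+\eta_{a(n)}\ge\boldsymbol f_{t_n}^{\mathsf T}\sum_{m\in\mathcal P(n)}\boldsymbol x_m+\boldsymbol c_{t_n}^{\mathsf T}\boldsymbol y_n$ ($n\ne1$). Two-stage model: the multistage model plus the constraints $\boldsymbol x_m=\boldsymbol x_n$ for all $m,n\in\mathcal T_t$, $t=1,\ldots,T$; optimal value $z^{TS}_R$. $\mathrm{VMS}_R:=z^{TS}_R-z^{MS}_R$. *)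

theory Defs
  imports Main "HOL-Library.Extended_Real"
begin

text \<open>Facilities are indexed by i < nF, customer sites by j < nC (0-based);
  periods are 1..Tp. Scenario tree nodes are elements of the set nodes, with root,
  parent function par and period (depth) function per.\<close>

record 'v fl_data =
  Tp    :: nat
  nF    :: nat
  nC    :: nat
  fcost :: "nat \<Rightarrow> nat \<Rightarrow> real"
  ccost :: "nat \<Rightarrow> nat \<Rightarrow> nat \<Rightarrow> real"
  cap   :: "nat \<Rightarrow> nat \<Rightarrow> real"
  nodes :: "'v set"
  root  :: 'v
  par   :: "'v \<Rightarrow> 'v"
  per   :: "'v \<Rightarrow> nat"
  pr    :: "'v \<Rightarrow> real"
  dem   :: "'v \<Rightarrow> nat \<Rightarrow> real"
  lam   :: "nat \<Rightarrow> real"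
  alp   :: "nat \<Rightarrow> real"

definition Fac :: "'v fl_data \<Rightarrow> nat set" where "Fac D = {..<nF D}"
definition Cus :: "'v fl_data \<Rightarrow> nat set" where "Cus D = {..<nC D}"

definition level :: "'v fl_data \<Rightarrow> nat \<Rightarrow> 'v set" where
  "level D t = {n \<in> nodes D. per D n = t}"

definition leaves :: "'v fl_data \<Rightarrow> 'v set" where
  "leaves D = level D (Tp D)"

definition children :: "'v fl_data \<Rightarrow> 'v \<Rightarrow> 'v set" where
  "children D n = {m \<in> nodes D. m \<noteq> root D \<and> par D m = n}"

definition path :: "'v fl_data \<Rightarrow> 'v \<Rightarrow> 'v set" where
  "path D n = {(par D ^^ k) n | k. k < per D n}"

definition valid_data :: "'v fl_data \<Rightarrow> bool" where
  "valid_data D \<longleftrightarrow>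
     Tp D \<ge> 2 \<and> nF D \<ge> 1 \<and> nC D \<ge> 1 \<and>
     (\<forall>t\<in>{1..Tp D}. \<forall>i\<in>Fac D. fcost D t i \<ge> 0 \<and> cap D t i > 0 \<and>
                         (\<forall>j\<in>Cus D. ccost D t i j \<ge> 0)) \<and>
     finite (nodes D) \<and> root D \<in> nodes D \<and> per D (root D) = 1 \<and>
     (\<forall>n\<in>nodes D. 1 \<le> per D n \<and> per D n \<le> Tp D) \<and>
     (\<forall>n\<in>nodes D. n \<noteq> root D \<longrightarrow> par D n \<in> nodes D \<and> per D n = per D (par D n) + 1) \<and>
     (\<forall>n\<in>nodes D. per D n < Tp D \<longrightarrow> children D n \<noteq> {}) \<and>
     (\<forall>n\<in>nodes D. pr D n > 0) \<and>
     (\<forall>t\<in>{1..Tp D}. (\<Sum>n\<in>level D t. pr D n) = 1) \<and>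
     (\<forall>n\<in>nodes D. per D n < Tp D \<longrightarrow> (\<Sum>m\<in>children D n. pr D m) = pr D n) \<and>
     (\<forall>n\<in>nodes D. \<forall>j\<in>Cus D. dem D n j \<ge> 0) \<and>
     (\<forall>t\<in>{2..Tp D}. 0 \<le> lam D t \<and> lam D t \<le> 1 \<and> 0 < alp D t \<and> alp D t < 1)"

definition cumx :: "'v fl_data \<Rightarrow> ('v \<Rightarrow> nat \<Rightarrow> real) \<Rightarrow> 'v \<Rightarrow> nat \<Rightarrow> real" where
  "cumx D x n i = (\<Sum>m\<in>path D n. x m i)"

text \<open>(B_t y)_i for the y-vector at node n, with t = t_n.\<close>
definition BY :: "'v fl_data \<Rightarrow> ('v \<Rightarrow> nat \<Rightarrow> nat \<Rightarrow> real) \<Rightarrow> 'v \<Rightarrow> nat \<Rightarrow> real" where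
  "BY D y n i = (1 / cap D (per D n) i) * (\<Sum>j\<in>Cus D. y n i j)"

definition ftil :: "'v fl_data \<Rightarrow> 'v \<Rightarrow> nat \<Rightarrow> real" where
  "ftil D n i = (if n = root D then 1 else 1 - lam D (per D n)) * fcost D (per D n) i"

definition ctil :: "'v fl_data \<Rightarrow> 'v \<Rightarrow> nat \<Rightarrow> nat \<Rightarrow> real" where
  "ctil D n i j = (if n = root D then 1 else 1 - lam D (per D n)) * ccost D (per D n) i j"

definition lamtil :: "'v fl_data \<Rightarrow> 'v \<Rightarrow> real" where
  "lamtil D n = (if per D n = Tp D then 0 else lam D (per D n + 1))"

definition alptil :: "'v fl_data \<Rightarrow> 'v \<Rightarrow> real" where
  "alptil D n = (if n = root D then 0 else lam D (per D n) / (1 - alp D (per D n)))"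

text \<open>Objective. (eta at leaves and u at the root are dummy values with zero coefficient
  and not constrained.)\<close>
definition obj :: "'v fl_data \<Rightarrow> ('v \<Rightarrow> nat \<Rightarrow> real) \<Rightarrow> ('v \<Rightarrow> nat \<Rightarrow> nat \<Rightarrow> real)
                    \<Rightarrow> ('v \<Rightarrow> real) \<Rightarrow> ('v \<Rightarrow> real) \<Rightarrow> real" where
  "obj D x y eta u = (\<Sum>n\<in>nodes D. pr D n *
      ((\<Sum>i\<in>Fac D. ftil D n i * cumx D x n i)
       + (\<Sum>i\<in>Fac D. \<Sum>j\<in>Cus D. ctil D n i j * y n i j)
       + lamtil D n * eta n + alptil D n * u n))"

text \<open>Feasibility; integral = integrality of x required, ts = two-stage
  (nonanticipativity across whole periods) constraints added.\<close>
definition feasible :: "'v fl_data \<Rightarrow> bool \<Rightarrow> bool \<Rightarrow> ('v \<Rightarrow> nat \<Rightarrow> real)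
     \<Rightarrow> ('v \<Rightarrow> nat \<Rightarrow> nat \<Rightarrow> real) \<Rightarrow> ('v \<Rightarrow> real) \<Rightarrow> ('v \<Rightarrow> real) \<Rightarrow> bool" where
  "feasible D integral ts x y eta u \<longleftrightarrow>
     (\<forall>n\<in>nodes D. \<forall>i\<in>Fac D. 0 \<le> x n i \<and> (integral \<longrightarrow> x n i \<in> \<int>)) \<and>
     (\<forall>n\<in>nodes D. \<forall>i\<in>Fac D. \<forall>j\<in>Cus D. 0 \<le> y n i j) \<and>
     (\<forall>n\<in>nodes D. n \<noteq> root D \<longrightarrow> 0 \<le> u n) \<and>
     (\<forall>n\<in>nodes D. \<forall>j\<in>Cus D. (\<Sum>i\<in>Fac D. y n i j) = dem D n j) \<and>
     (\<forall>n\<in>nodes D. \<forall>i\<in>Fac D. BY D y n i \<le> cumx D x n i) \<and>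
     (\<forall>n\<in>nodes D. n \<noteq> root D \<longrightarrow>
        u n + eta (par D n) \<ge> (\<Sum>i\<in>Fac D. fcost D (per D n) i * cumx D x n i)
                              + (\<Sum>i\<in>Fac D. \<Sum>j\<in>Cus D. ccost D (per D n) i j * y n i j)) \<and>
     (ts \<longrightarrow> (\<forall>m\<in>nodes D. \<forall>n\<in>nodes D. per D m = per D n \<longrightarrow> (\<forall>i\<in>Fac D. x m i = x n i)))"

definition zMS :: "'v fl_data \<Rightarrow> real" where
  "zMS D = Inf {obj D x y eta u | x y eta u. feasible D True False x y eta u}"

definition zTS :: "'v fl_data \<Rightarrow> real" where
  "zTS D = Inf {obj D x y eta u | x y eta u. feasible D True True x y eta u}"

definition VMS :: "'v fl_data \<Rightarrow> real" where
  "VMS D = zTS D - zMS D"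

definition ceilBY :: "'v fl_data \<Rightarrow> ('v \<Rightarrow> nat \<Rightarrow> nat \<Rightarrow> real) \<Rightarrow> 'v \<Rightarrow> nat \<Rightarrow> real" where
  "ceilBY D y n i = real_of_int \<lceil>BY D y n i\<rceil>"

definition maxceil :: "'v fl_data \<Rightarrow> ('v \<Rightarrow> nat \<Rightarrow> nat \<Rightarrow> real) \<Rightarrow> 'v \<Rightarrow> nat \<Rightarrow> real" where
  "maxceil D y n i = Max ((\<lambda>m. ceilBY D y m i) ` path D n)"

definition maxlev :: "'v fl_data \<Rightarrow> ('v \<Rightarrow> nat \<Rightarrow> nat \<Rightarrow> real) \<Rightarrow> 'v \<Rightarrow> nat \<Rightarrow> real" where
  "maxlev D y n i = Max ((\<lambda>m. Max ((\<lambda>l. BY D y l i) ` level D (per D m))) ` path D n)"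

definition xMS :: "'v fl_data \<Rightarrow> ('v \<Rightarrow> nat \<Rightarrow> nat \<Rightarrow> real) \<Rightarrow> 'v \<Rightarrow> nat \<Rightarrow> real" where
  "xMS D y n i = (if n = root D then ceilBY D y (root D) i
                  else maxceil D y n i - maxceil D y (par D n) i)"

definition xTS :: "'v fl_data \<Rightarrow> ('v \<Rightarrow> nat \<Rightarrow> nat \<Rightarrow> real) \<Rightarrow> 'v \<Rightarrow> nat \<Rightarrow> real" where
  "xTS D y n i = (if n = root D then BY D y (root D) i
                  else maxlev D y n i - maxlev D y (par D n) i)"

definition etaOf :: "'v fl_data \<Rightarrow> ('v \<Rightarrow> nat \<Rightarrow> real) \<Rightarrow> ('v \<Rightarrow> nat \<Rightarrow> nat \<Rightarrow> real)
                      \<Rightarrow> ('v \<Rightarrow> real) \<Rightarrow> 'v \<Rightarrow> real" where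
  "etaOf D x y u n = Max ((\<lambda>m. (\<Sum>i\<in>Fac D. fcost D (per D m) i * (\<Sum>l\<in>path D m. x l i))
                              + (\<Sum>i\<in>Fac D. \<Sum>j\<in>Cus D. ccost D (per D m) i j * y m i j)
                              - u m) ` children D n)"

definition etaMS where "etaMS D y u n = etaOf D (xMS D y) y u n"
definition etaTS where "etaTS D y u n = etaOf D (xTS D y) y u n"

definition LB1 :: "'v fl_data \<Rightarrow> ('v \<Rightarrow> nat \<Rightarrow> nat \<Rightarrow> real) \<Rightarrow> ('v \<Rightarrow> real) \<Rightarrow> real" where
  "LB1 D y u =
     (\<Sum>i\<in>Fac D. fcost D (per D (root D)) i * (BY D y (root D) i - ceilBY D y (root D) i))
   + (\<Sum>n\<in>nodes D - {root D}. pr D n * (1 - lam D (per D n)) *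
        (\<Sum>i\<in>Fac D. fcost D (per D n) i * (maxlev D y n i - maxceil D y n i)))
   + (\<Sum>n\<in>nodes D - leaves D. pr D n * lam D (per D n + 1) * (etaTS D y u n - etaMS D y u n))"

end

theory Submission
  imports Defs
begin

(*
  Let (x, y, eta, u) be an optimal solution of the LP relaxation of the two-stage model, so that
  obj (x, y, eta, u) <= zTS.  Keeping y and u, two solutions are built whose cumulative capacity
  along a path is a running maximum of capacity requirements: for xMS the rounded-up requirements
  of the nodes on the path, which gives an integer multistage solution and hence
  zMS <= obj (xMS, ...); for xTS the largest requirement of each whole period, which any two-stage
  solution must cover by nonanticipativity, so obj (xTS, ...) <= obj (x, ...).  In both, eta is
  the least value allowed by the CVaR constraints of the children.  Thus
  VMS >= obj (xTS, ...) - obj (xMS, ...), and expanding this difference node by node gives LB1.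
*)

section \<open>Feasible solutions and the objective\<close>

definition stage_cost ::
    "'v fl_data \<Rightarrow> ('v \<Rightarrow> nat \<Rightarrow> real) \<Rightarrow> ('v \<Rightarrow> nat \<Rightarrow> nat \<Rightarrow> real) \<Rightarrow> 'v \<Rightarrow> real" where
  "stage_cost D x y n =
     (\<Sum>i\<in>Fac D. fcost D (per D n) i * cumx D x n i)
     + (\<Sum>i\<in>Fac D. \<Sum>j\<in>Cus D. ccost D (per D n) i j * y n i j)"

lemma etaOf_stage_cost:
  "etaOf D x y u n = Max ((\<lambda>m. stage_cost D x y m - u m) ` children D n)"
  unfolding etaOf_def stage_cost_def cumx_def ..

lemma
  assumes "feasible D b ts x y eta u"
  shows feasible_x_nonneg: "\<lbrakk>n \<in> nodes D; i \<in> Fac D\<rbrakk> \<Longrightarrow> 0 \<le> x n i"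
    and feasible_y_nonneg: "\<lbrakk>n \<in> nodes D; i \<in> Fac D; j \<in> Cus D\<rbrakk> \<Longrightarrow> 0 \<le> y n i j"
    and feasible_u_nonneg: "\<lbrakk>n \<in> nodes D; n \<noteq> root D\<rbrakk> \<Longrightarrow> 0 \<le> u n"
    and feasible_demand: "\<lbrakk>n \<in> nodes D; j \<in> Cus D\<rbrakk> \<Longrightarrow> (\<Sum>i\<in>Fac D. y n i j) = dem D n j"
    and feasible_capacity: "\<lbrakk>n \<in> nodes D; i \<in> Fac D\<rbrakk> \<Longrightarrow> BY D y n i \<le> cumx D x n i"
    and feasible_risk: "\<lbrakk>n \<in> nodes D; n \<noteq> root D\<rbrakk> \<Longrightarrow> stage_cost D x y n \<le> u n + eta (par D n)"
    and feasible_nonanticipative: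
      "\<lbrakk>ts; m \<in> nodes D; n \<in> nodes D; per D m = per D n; i \<in> Fac D\<rbrakk> \<Longrightarrow> x m i = x n i"
  using assms unfolding feasible_def stage_cost_def by blast+

lemma feasibleI:
  assumes "\<And>n i. \<lbrakk>n \<in> nodes D; i \<in> Fac D\<rbrakk> \<Longrightarrow> 0 \<le> x n i"
    and "\<And>n i. \<lbrakk>integral; n \<in> nodes D; i \<in> Fac D\<rbrakk> \<Longrightarrow> x n i \<in> \<int>"
    and "\<And>n i j. \<lbrakk>n \<in> nodes D; i \<in> Fac D; j \<in> Cus D\<rbrakk> \<Longrightarrow> 0 \<le> y n i j"
    and "\<And>n. \<lbrakk>n \<in> nodes D; n \<noteq> root D\<rbrakk> \<Longrightarrow> 0 \<le> u n"
    and "\<And>n j. \<lbrakk>n \<in> nodes D; j \<in> Cus D\<rbrakk> \<Longrightarrow> (\<Sum>i\<in>Fac D. y n i j) = dem D n j"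
    and "\<And>n i. \<lbrakk>n \<in> nodes D; i \<in> Fac D\<rbrakk> \<Longrightarrow> BY D y n i \<le> cumx D x n i"
    and "\<And>n. \<lbrakk>n \<in> nodes D; n \<noteq> root D\<rbrakk> \<Longrightarrow> stage_cost D x y n \<le> u n + eta (par D n)"
    and "\<And>m n i. \<lbrakk>ts; m \<in> nodes D; n \<in> nodes D; per D m = per D n; i \<in> Fac D\<rbrakk> \<Longrightarrow> x m i = x n i"
  shows "feasible D integral ts x y eta u"
  using assms unfolding feasible_def stage_cost_def by blast+

lemma feasible_relax: "feasible D True ts x y eta u \<Longrightarrow> feasible D False ts x y eta u"
  unfolding feasible_def by blast

lemma obj_diff:
  "obj D x y eta u - obj D x' y eta' u
   = (\<Sum>n\<in>nodes D. pr D n * ((\<Sum>i\<in>Fac D. ftil D n i * (cumx D x n i - cumx D x' n i))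
                                  + lamtil D n * (eta n - eta' n)))"
  unfolding obj_def sum_subtractf[symmetric]
  by (rule sum.cong[OF refl]) (simp add: algebra_simps sum_subtractf)

section \<open>Scenario trees\<close>

definition increments :: "'v fl_data \<Rightarrow> ('v \<Rightarrow> nat \<Rightarrow> real) \<Rightarrow> 'v \<Rightarrow> nat \<Rightarrow> real" where
  "increments D H n i = (if n = root D then H n i else H n i - H (par D n) i)"

locale scenario_tree =
  fixes D :: "'v fl_data"
  assumes finite_nodes: "finite (nodes D)"
    and root_in_nodes: "root D \<in> nodes D"
    and per_root: "per D (root D) = 1"
    and par_in_nodes: "\<lbrakk>n \<in> nodes D; n \<noteq> root D\<rbrakk> \<Longrightarrow> par D n \<in> nodes D"
    and per_par: "\<lbrakk>n \<in> nodes D; n \<noteq> root D\<rbrakk> \<Longrightarrow> per D n = Suc (per D (par D n))"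
begin

lemma tree_induct [consumes 1, case_names root par]:
  assumes "n \<in> nodes D"
    and "P (root D)"
    and "\<And>n. \<lbrakk>n \<in> nodes D; n \<noteq> root D; P (par D n)\<rbrakk> \<Longrightarrow> P n"
  shows "P n"
  using assms(1)
proof (induction "per D n" arbitrary: n rule: less_induct)
  case less
  show ?case
  proof (cases "n = root D")
    case True
    then show ?thesis using assms(2) by simp
  next
    case False
    have "par D n \<in> nodes D" "per D (par D n) < per D n"
      using par_in_nodes[OF less.prems False] per_par[OF less.prems False] by simp_all
    then have "P (par D n)" using less.hyps by blast
    then show ?thesis by (rule assms(3)[OF less.prems False])
  qed
qed

lemma per_pos: "n \<in> nodes D \<Longrightarrow> 0 < per D n"
  by (induction rule: tree_induct) (simp_all add: per_root per_par)

lemma per_eq_1_imp_root: "\<lbrakk>n \<in> nodes D; per D n = 1\<rbrakk> \<Longrightarrow> n = root D"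
  using per_par per_pos par_in_nodes by fastforce

lemma level_1: "level D 1 = {root D}"
  unfolding level_def using per_eq_1_imp_root root_in_nodes per_root by blast

lemma finite_level: "finite (level D t)"
  unfolding level_def using finite_nodes by simp

lemma path_eq_image: "path D n = (\<lambda>k. (par D ^^ k) n) ` {..<per D n}"
  unfolding path_def by blast

lemma finite_path: "finite (path D n)"
  unfolding path_eq_image by simp

lemma path_root: "path D (root D) = {root D}"
  unfolding path_eq_image per_root by auto

lemma path_par:
  assumes "n \<in> nodes D" "n \<noteq> root D"
  shows "path D n = insert n (path D (par D n))"
  unfolding path_eq_image per_par[OF assms] lessThan_Suc_eq_insert_0 image_insert image_image
  by (simp add: funpow_Suc_right del: funpow.simps)

lemma in_path: "n \<in> nodes D \<Longrightarrow> n \<in> path D n"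
  unfolding path_def using per_pos by force

lemma path_subset_nodes: "n \<in> nodes D \<Longrightarrow> path D n \<subseteq> nodes D"
proof (induction rule: tree_induct)
  case root
  then show ?case by (simp add: path_root root_in_nodes)
next
  case (par n)
  then show ?case unfolding path_par[OF par.hyps] by blast
qed

lemma per_le_in_path: "\<lbrakk>n \<in> nodes D; m \<in> path D n\<rbrakk> \<Longrightarrow> per D m \<le> per D n"
proof (induction rule: tree_induct)
  case root
  then show ?case by (simp add: path_root)
next
  case (par n)
  show ?case
  proof (cases "m = n")
    case False
    then have "m \<in> path D (par D n)" using par.prems unfolding path_par[OF par.hyps] by blast
    then show ?thesis using par.IH per_par[OF par.hyps] by simp
  qed simp
qed

lemma path_mono: "\<lbrakk>n \<in> nodes D; m \<in> path D n\<rbrakk> \<Longrightarrow> path D m \<subseteq> path D n"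
proof (induction rule: tree_induct)
  case root
  then show ?case by (simp add: path_root)
next
  case (par n)
  show ?case
  proof (cases "m = n")
    case False
    then have "m \<in> path D (par D n)" using par.prems unfolding path_par[OF par.hyps] by blast
    then show ?thesis using par.IH unfolding path_par[OF par.hyps] by blast
  qed simp
qed

lemma not_in_path_par:
  assumes "n \<in> nodes D" "n \<noteq> root D"
  shows "n \<notin> path D (par D n)"
proof
  assume "n \<in> path D (par D n)"
  then have "per D n \<le> per D (par D n)"
    by (rule per_le_in_path[OF par_in_nodes[OF assms]])
  then show False
    using per_par[OF assms] by simp
qed

lemma cumx_root: "cumx D x (root D) i = x (root D) i"
  unfolding cumx_def path_root by simp

lemma cumx_par:
  assumes "n \<in> nodes D" "n \<noteq> root D"
  shows "cumx D x n i = x n i + cumx D x (par D n) i"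
  unfolding cumx_def path_par[OF assms] using finite_path not_in_path_par[OF assms] by simp

lemma cumx_increments:
  assumes "n \<in> nodes D"
  shows "cumx D (increments D H) n i = H n i"
  using assms
proof (induction rule: tree_induct)
  case root
  then show ?case by (simp add: cumx_root increments_def)
next
  case (par n)
  then show ?case by (simp add: cumx_par increments_def)
qed

lemma cumx_nonneg:
  assumes "n \<in> nodes D" "\<And>l. l \<in> nodes D \<Longrightarrow> 0 \<le> x l i"
  shows "0 \<le> cumx D x n i"
  unfolding cumx_def using path_subset_nodes[OF assms(1)] assms(2) by (intro sum_nonneg) auto

lemma cumx_le_cumx_in_path:
  assumes "n \<in> nodes D" "m \<in> path D n" "\<And>l. l \<in> nodes D \<Longrightarrow> 0 \<le> x l i"
  shows "cumx D x m i \<le> cumx D x n i"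
  unfolding cumx_def
  using path_mono[OF assms(1,2)] path_subset_nodes[OF assms(1)] assms(3)
  by (intro sum_mono2 finite_path) auto

lemma finite_children: "finite (children D n)"
  unfolding children_def using finite_nodes by simp

lemma children_per: "m \<in> children D n \<Longrightarrow> per D m = Suc (per D n)"
  unfolding children_def using per_par by auto

lemma sum_nonroot_by_parent:
  "(\<Sum>m\<in>nodes D - {root D}. g m) = (\<Sum>n\<in>nodes D. \<Sum>m\<in>children D n. g m)"
proof -
  have "children D n = {m. m \<in> nodes D - {root D} \<and> par D m = n}" for n
    unfolding children_def by blast
  moreover have "(\<Sum>n\<in>nodes D. \<Sum>m\<in>{m. m \<in> nodes D - {root D} \<and> par D m = n}. g m)
      = (\<Sum>m\<in>nodes D - {root D}. g m)"
    using finite_nodes par_in_nodes by (intro sum.group) auto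
  ultimately show ?thesis by simp
qed

lemma etaOf_ge_stage_cost:
  assumes "m \<in> nodes D" "m \<noteq> root D"
  shows "stage_cost D x y m - u m \<le> etaOf D x y u (par D m)"
proof -
  have "m \<in> children D (par D m)"
    unfolding children_def using assms by simp
  then show ?thesis
    unfolding etaOf_stage_cost by (intro Max_ge finite_imageI finite_children) simp
qed

end

locale valid_instance =
  fixes D :: "'v fl_data"
  assumes valid: "valid_data D"

sublocale valid_instance \<subseteq> scenario_tree
  by unfold_locales (insert valid, auto simp: valid_data_def)

context valid_instance
begin

lemma per_le_Tp: "n \<in> nodes D \<Longrightarrow> per D n \<le> Tp D"
  using valid unfolding valid_data_def by blast

lemma per_range: "n \<in> nodes D \<Longrightarrow> per D n \<in> {1..Tp D}"
  using per_pos per_le_Tp by (simp add: Suc_le_eq)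

lemma per_nonroot: "\<lbrakk>n \<in> nodes D; n \<noteq> root D\<rbrakk> \<Longrightarrow> per D n \<in> {2..Tp D}"
  using per_par per_pos[OF par_in_nodes] per_le_Tp by fastforce

lemma fcost_nonneg: "\<lbrakk>n \<in> nodes D; i \<in> Fac D\<rbrakk> \<Longrightarrow> 0 \<le> fcost D (per D n) i"
  using valid per_range unfolding valid_data_def by blast

lemma ccost_nonneg: "\<lbrakk>n \<in> nodes D; i \<in> Fac D; j \<in> Cus D\<rbrakk> \<Longrightarrow> 0 \<le> ccost D (per D n) i j"
  using valid per_range unfolding valid_data_def by blast

lemma cap_pos: "\<lbrakk>n \<in> nodes D; i \<in> Fac D\<rbrakk> \<Longrightarrow> 0 < cap D (per D n) i"
  using valid per_range unfolding valid_data_def by blast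

lemma risk_params:
  assumes "t \<in> {2..Tp D}"
  shows "0 \<le> lam D t" "lam D t \<le> 1" "0 < alp D t" "alp D t < 1"
  using valid assms unfolding valid_data_def by blast+

lemma pr_pos: "n \<in> nodes D \<Longrightarrow> 0 < pr D n"
  using valid unfolding valid_data_def by blast

lemma pr_root: "pr D (root D) = 1"
proof -
  have "1 \<in> {1..Tp D}"
    using valid unfolding valid_data_def by simp
  then have "(\<Sum>n\<in>level D 1. pr D n) = 1"
    using valid unfolding valid_data_def by blast
  then show ?thesis
    unfolding level_1 by simp
qed

lemma pr_children: "\<lbrakk>n \<in> nodes D; per D n < Tp D\<rbrakk> \<Longrightarrow> (\<Sum>m\<in>children D n. pr D m) = pr D n"
  using valid unfolding valid_data_def by blast

lemma children_nonempty: "\<lbrakk>n \<in> nodes D; per D n < Tp D\<rbrakk> \<Longrightarrow> children D n \<noteq> {}"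
  using valid unfolding valid_data_def by blast

lemma children_leaf:
  assumes "n \<in> nodes D" "per D n = Tp D"
  shows "children D n = {}"
proof (rule equals0I)
  fix m assume "m \<in> children D n"
  then have m: "m \<in> nodes D" "m \<noteq> root D" "par D m = n"
    unfolding children_def by auto
  then have "per D m = Suc (Tp D)"
    using per_par[OF m(1,2)] assms(2) by simp
  then show False
    using per_le_Tp[OF m(1)] by simp
qed

lemma ftil_nonneg: "\<lbrakk>n \<in> nodes D; i \<in> Fac D\<rbrakk> \<Longrightarrow> 0 \<le> ftil D n i"
  unfolding ftil_def using fcost_nonneg risk_params(2)[OF per_nonroot] by simp

lemma ctil_nonneg: "\<lbrakk>n \<in> nodes D; i \<in> Fac D; j \<in> Cus D\<rbrakk> \<Longrightarrow> 0 \<le> ctil D n i j"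
  unfolding ctil_def using ccost_nonneg risk_params(2)[OF per_nonroot] by simp

lemma lamtil_nonneg:
  assumes "n \<in> nodes D"
  shows "0 \<le> lamtil D n"
proof (cases "per D n = Tp D")
  case False
  then have "per D n + 1 \<in> {2..Tp D}"
    using per_pos[OF assms] per_le_Tp[OF assms] by simp
  then show ?thesis
    unfolding lamtil_def using risk_params(1) by simp
qed (simp add: lamtil_def)

lemma sum_pr_lamtil_by_children:
  "(\<Sum>n\<in>nodes D. pr D n * lamtil D n * e n)
   = (\<Sum>m\<in>nodes D - {root D}. pr D m * lam D (per D m) * e (par D m))"
  unfolding sum_nonroot_by_parent
proof (rule sum.cong[OF refl])
  fix n assume n: "n \<in> nodes D"
  show "pr D n * lamtil D n * e n = (\<Sum>m\<in>children D n. pr D m * lam D (per D m) * e (par D m))"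
  proof (cases "per D n = Tp D")
    case True
    then show ?thesis using children_leaf[OF n] by (simp add: lamtil_def)
  next
    case False
    have "(\<Sum>m\<in>children D n. pr D m * lam D (per D m) * e (par D m))
        = (\<Sum>m\<in>children D n. pr D m) * lam D (per D n + 1) * e n"
      unfolding sum_distrib_right by (rule sum.cong) (auto simp: children_per children_def)
    also have "\<dots> = pr D n * lamtil D n * e n"
      using False per_le_Tp[OF n] pr_children[OF n] by (simp add: lamtil_def)
    finally show ?thesis ..
  qed
qed

lemma sum_pr_lamtil_nonleaves:
  "(\<Sum>n\<in>nodes D. pr D n * lamtil D n * e n)
   = (\<Sum>n\<in>nodes D - leaves D. pr D n * lam D (per D n + 1) * e n)"
  by (rule sum.mono_neutral_cong_right)
    (auto simp: finite_nodes lamtil_def leaves_def level_def)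

lemma stage_cost_nonneg:
  assumes "feasible D b ts x y eta u" "n \<in> nodes D"
  shows "0 \<le> stage_cost D x y n"
  unfolding stage_cost_def
  using fcost_nonneg[OF assms(2)] ccost_nonneg[OF assms(2)] feasible_y_nonneg[OF assms(1,2)]
    cumx_nonneg[OF assms(2) feasible_x_nonneg[OF assms(1)]]
  by (intro add_nonneg_nonneg sum_nonneg mult_nonneg_nonneg) auto

lemma stage_cost_mono:
  assumes "n \<in> nodes D" "\<And>i. i \<in> Fac D \<Longrightarrow> cumx D x' n i \<le> cumx D x n i"
  shows "stage_cost D x' y n \<le> stage_cost D x y n"
  unfolding stage_cost_def
  using fcost_nonneg[OF assms(1)] assms(2) by (simp add: sum_mono mult_left_mono)

lemma etaOf_le:
  assumes "n \<in> nodes D" "per D n < Tp D"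
    and "\<And>m. m \<in> children D n \<Longrightarrow> stage_cost D x y m - u m \<le> e"
  shows "etaOf D x y u n \<le> e"
  unfolding etaOf_stage_cost
  using children_nonempty[OF assms(1,2)] finite_children assms(3)
  by (intro Max.boundedI) auto

lemma obj_mono:
  assumes "\<And>n i. \<lbrakk>n \<in> nodes D; i \<in> Fac D\<rbrakk> \<Longrightarrow> cumx D x' n i \<le> cumx D x n i"
    and "\<And>n. \<lbrakk>n \<in> nodes D; per D n < Tp D\<rbrakk> \<Longrightarrow> eta' n \<le> eta n"
  shows "obj D x' y eta' u \<le> obj D x y eta u"
proof -
  have "0 \<le> obj D x y eta u - obj D x' y eta' u"
    unfolding obj_diff
  proof (rule sum_nonneg)
    fix n assume n: "n \<in> nodes D"
    have "0 \<le> (\<Sum>i\<in>Fac D. ftil D n i * (cumx D x n i - cumx D x' n i))"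
      using ftil_nonneg[OF n] assms(1)[OF n] by (intro sum_nonneg mult_nonneg_nonneg) auto
    moreover have "0 \<le> lamtil D n * (eta n - eta' n)"
    proof (cases "per D n = Tp D")
      case False
      then show ?thesis
        using lamtil_nonneg[OF n] assms(2)[OF n] per_le_Tp[OF n] by simp
    qed (simp add: lamtil_def)
    ultimately show "0 \<le> pr D n * ((\<Sum>i\<in>Fac D. ftil D n i * (cumx D x n i - cumx D x' n i))
                                  + lamtil D n * (eta n - eta' n))"
      using pr_pos[OF n] by simp
  qed
  then show ?thesis by simp
qed

lemma risk_term_nonneg:
  assumes "feasible D b ts x y eta u" "m \<in> nodes D" "m \<noteq> root D"
  shows "0 \<le> lam D (per D m) * (eta (par D m) + u m / (1 - alp D (per D m)))"
proof -
  note params = risk_params[OF per_nonroot[OF assms(2,3)]]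
  have "0 \<le> eta (par D m) + u m"
    using stage_cost_nonneg[OF assms(1,2)] feasible_risk[OF assms(1,2,3)] by simp
  moreover have "u m \<le> u m / (1 - alp D (per D m))"
    using params feasible_u_nonneg[OF assms(1,2,3)] by (simp add: le_divide_eq mult_left_le)
  ultimately show ?thesis
    using params(1) by simp
qed

lemma obj_nonneg:
  assumes "feasible D b ts x y eta u"
  shows "0 \<le> obj D x y eta u"
proof -
  define base where "base n = (\<Sum>i\<in>Fac D. ftil D n i * cumx D x n i)
    + (\<Sum>i\<in>Fac D. \<Sum>j\<in>Cus D. ctil D n i j * y n i j)" for n
  have alptil_sum: "(\<Sum>n\<in>nodes D. pr D n * alptil D n * u n)
      = (\<Sum>m\<in>nodes D - {root D}. pr D m * lam D (per D m) * (u m / (1 - alp D (per D m))))"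
    unfolding sum.remove[OF finite_nodes root_in_nodes] by (simp add: alptil_def)
  have "obj D x y eta u = (\<Sum>n\<in>nodes D. pr D n * base n)
      + (\<Sum>n\<in>nodes D. pr D n * lamtil D n * eta n) + (\<Sum>n\<in>nodes D. pr D n * alptil D n * u n)"
    unfolding obj_def base_def sum.distrib[symmetric] by (rule sum.cong) (simp_all add: algebra_simps)
  \<comment> \<open>each child's share of its parent's \<open>eta\<close> is paired with its own \<open>u\<close>-term\<close>
  also have "\<dots> = (\<Sum>n\<in>nodes D. pr D n * base n)
      + (\<Sum>m\<in>nodes D - {root D}. pr D m * (lam D (per D m) * (eta (par D m) + u m / (1 - alp D (per D m)))))"
    unfolding sum_pr_lamtil_by_children alptil_sum add.assoc sum.distrib[symmetric]
    by (simp add: algebra_simps)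
  also have "0 \<le> \<dots>"
  proof (rule add_nonneg_nonneg; rule sum_nonneg)
    fix n assume n: "n \<in> nodes D"
    have "0 \<le> base n"
      unfolding base_def
      using ftil_nonneg[OF n] ctil_nonneg[OF n] feasible_y_nonneg[OF assms n]
        cumx_nonneg[OF n feasible_x_nonneg[OF assms]]
      by (intro add_nonneg_nonneg sum_nonneg mult_nonneg_nonneg) auto
    then show "0 \<le> pr D n * base n"
      using pr_pos[OF n] by simp
  next
    fix m assume "m \<in> nodes D - {root D}"
    then show "0 \<le> pr D m * (lam D (per D m) * (eta (par D m) + u m / (1 - alp D (per D m))))"
      using pr_pos[of m] risk_term_nonneg[OF assms, of m] by simp
  qed
  finally show ?thesis .
qed

lemma zMS_le_obj:
  assumes "feasible D True False x y eta u"
  shows "zMS D \<le> obj D x y eta u"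
  unfolding zMS_def
proof (rule cInf_lower)
  show "obj D x y eta u \<in> {obj D x y eta u | x y eta u. feasible D True False x y eta u}"
    using assms by blast
  show "bdd_below {obj D x y eta u | x y eta u. feasible D True False x y eta u}"
    using obj_nonneg by (intro bdd_belowI[of _ 0]) blast
qed

lemma feasible_round_up:
  assumes "feasible D b True x y eta u"
  shows "\<exists>x' u'. feasible D True True x' y eta u'"
proof -
  define x' where "x' n i = real_of_int \<lceil>x n i\<rceil>" for n i
  define u' where "u' n = u n + stage_cost D x' y n - stage_cost D x y n" for n
  have cumx_le: "cumx D x n i \<le> cumx D x' n i" for n i
    unfolding cumx_def x'_def by (intro sum_mono) simp
  have "feasible D True True x' y eta u'"
  proof (rule feasibleI)
    fix n i assume n: "n \<in> nodes D" and i: "i \<in> Fac D"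
    show "0 \<le> x' n i"
      unfolding x'_def using feasible_x_nonneg[OF assms n i] by simp
    show "x' n i \<in> \<int>"
      unfolding x'_def by simp
    show "BY D y n i \<le> cumx D x' n i"
      using feasible_capacity[OF assms n i] cumx_le[of n i] by simp
  next
    fix n assume n: "n \<in> nodes D" "n \<noteq> root D"
    have "stage_cost D x y n \<le> stage_cost D x' y n"
      using cumx_le by (intro stage_cost_mono[OF n(1)])
    then show "0 \<le> u' n"
      unfolding u'_def using feasible_u_nonneg[OF assms n] by simp
    show "stage_cost D x' y n \<le> u' n + eta (par D n)"
      unfolding u'_def using feasible_risk[OF assms n] by simp
  next
    fix m n i assume "m \<in> nodes D" "n \<in> nodes D" "per D m = per D n" "i \<in> Fac D"
    then have "x m i = x n i"
      by (rule feasible_nonanticipative[OF assms TrueI])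
    then show "x' m i = x' n i"
      unfolding x'_def by simp
  qed (use feasible_y_nonneg[OF assms] feasible_demand[OF assms] in auto)
  then show ?thesis by blast
qed

lemma LP_optimum_le_zTS:
  assumes "feasible D False True x y eta u"
    and "\<forall>x' y' eta' u'. feasible D False True x' y' eta' u' \<longrightarrow>
           obj D x y eta u \<le> obj D x' y' eta' u'"
  shows "obj D x y eta u \<le> zTS D"
  unfolding zTS_def
proof (rule cInf_greatest)
  show "{obj D x y eta u | x y eta u. feasible D True True x y eta u} \<noteq> {}"
    using feasible_round_up[OF assms(1)] by blast
  fix z assume "z \<in> {obj D x y eta u | x y eta u. feasible D True True x y eta u}"
  then show "obj D x y eta u \<le> z"
    using assms(2) feasible_relax by blast
qed

end

section \<open>The candidate solutions\<close>

context scenario_tree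
begin

lemma maxceil_root: "maxceil D y (root D) i = ceilBY D y (root D) i"
  unfolding maxceil_def path_root by simp

lemma maxlev_root: "maxlev D y (root D) i = BY D y (root D) i"
  unfolding maxlev_def path_root by (simp del: One_nat_def add: per_root level_1)

lemma xMS_eq_increments: "xMS D y = increments D (maxceil D y)"
  unfolding xMS_def increments_def by (intro ext) (simp add: maxceil_root)

lemma xTS_eq_increments: "xTS D y = increments D (maxlev D y)"
  unfolding xTS_def increments_def by (intro ext) (simp add: maxlev_root)

lemma cumx_xMS: "n \<in> nodes D \<Longrightarrow> cumx D (xMS D y) n i = maxceil D y n i"
  unfolding xMS_eq_increments by (rule cumx_increments)

lemma cumx_xTS: "n \<in> nodes D \<Longrightarrow> cumx D (xTS D y) n i = maxlev D y n i"
  unfolding xTS_eq_increments by (rule cumx_increments)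

lemma ceilBY_le_maxceil: "n \<in> nodes D \<Longrightarrow> ceilBY D y n i \<le> maxceil D y n i"
  unfolding maxceil_def using in_path finite_path by simp

lemma maxceil_par_le:
  assumes "n \<in> nodes D" "n \<noteq> root D"
  shows "maxceil D y (par D n) i \<le> maxceil D y n i"
  unfolding maxceil_def using in_path[OF par_in_nodes[OF assms]] finite_path
  by (intro Max_mono) (auto simp: path_par[OF assms])

lemma maxceil_Ints:
  assumes "n \<in> nodes D"
  shows "maxceil D y n i \<in> \<int>"
proof -
  have "maxceil D y n i \<in> (\<lambda>m. ceilBY D y m i) ` path D n"
    unfolding maxceil_def using in_path[OF assms] finite_path by (intro Max_in) auto
  then show ?thesis
    unfolding ceilBY_def by auto
qed

end

context valid_instance
begin

lemma BY_nonneg: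
  assumes "feasible D b ts x y eta u" "n \<in> nodes D" "i \<in> Fac D"
  shows "0 \<le> BY D y n i"
  unfolding BY_def using cap_pos[OF assms(2,3)] feasible_y_nonneg[OF assms]
  by (simp add: sum_nonneg)

lemma feasible_xMS:
  assumes "feasible D b ts x y eta u"
  shows "feasible D True False (xMS D y) y (etaMS D y u) u"
proof (rule feasibleI)
  fix n i assume n: "n \<in> nodes D" and i: "i \<in> Fac D"
  show "0 \<le> xMS D y n i"
  proof (cases "n = root D")
    case True
    then show ?thesis
      using BY_nonneg[OF assms n i] unfolding xMS_def ceilBY_def by simp
  next
    case False
    then show ?thesis
      using maxceil_par_le[OF n False] unfolding xMS_def by simp
  qed
  show "xMS D y n i \<in> \<int>"
    unfolding xMS_def ceilBY_def
    using maxceil_Ints[OF n] maxceil_Ints[OF par_in_nodes[OF n]] by simp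
  have "BY D y n i \<le> ceilBY D y n i"
    unfolding ceilBY_def by simp
  also have "\<dots> \<le> maxceil D y n i"
    by (rule ceilBY_le_maxceil[OF n])
  finally show "BY D y n i \<le> cumx D (xMS D y) n i"
    unfolding cumx_xMS[OF n] .
next
  fix n assume "n \<in> nodes D" "n \<noteq> root D"
  then have "stage_cost D (xMS D y) y n - u n \<le> etaMS D y u (par D n)"
    unfolding etaMS_def by (rule etaOf_ge_stage_cost)
  then show "stage_cost D (xMS D y) y n \<le> u n + etaMS D y u (par D n)"
    by simp
qed (use feasible_y_nonneg[OF assms] feasible_u_nonneg[OF assms] feasible_demand[OF assms] in auto)

lemma cumx_eq_on_level:
  assumes "feasible D b True x y eta u" "m \<in> nodes D" "l \<in> nodes D" "per D m = per D l" "i \<in> Fac D"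
  shows "cumx D x m i = cumx D x l i"
  using assms(2-4)
proof (induction m arbitrary: l rule: tree_induct)
  case root
  then have "l = root D"
    using per_eq_1_imp_root per_root by simp
  then show ?case by simp
next
  case (par m)
  have "l \<noteq> root D"
    using par.prems(2) per_par[OF par.hyps] per_pos[OF par_in_nodes[OF par.hyps]] per_root by auto
  then have "per D (par D m) = per D (par D l)"
    using par.prems per_par[OF par.hyps] per_par[of l] by simp
  then have "cumx D x (par D m) i = cumx D x (par D l) i"
    using par.IH par_in_nodes[OF par.prems(1) \<open>l \<noteq> root D\<close>] by blast
  moreover have "x m i = x l i"
    using feasible_nonanticipative[OF assms(1) TrueI par.hyps(1) par.prems assms(5)] .
  ultimately show ?case
    using cumx_par[OF par.hyps] cumx_par[OF par.prems(1) \<open>l \<noteq> root D\<close>] by simp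
qed

lemma maxlev_le_cumx:
  assumes "feasible D b True x y eta u" "n \<in> nodes D" "i \<in> Fac D"
  shows "maxlev D y n i \<le> cumx D x n i"
  unfolding maxlev_def
proof (rule Max.boundedI)
  show "finite ((\<lambda>m. Max ((\<lambda>l. BY D y l i) ` level D (per D m))) ` path D n)"
    by (simp add: finite_path)
  show "(\<lambda>m. Max ((\<lambda>l. BY D y l i) ` level D (per D m))) ` path D n \<noteq> {}"
    using in_path[OF assms(2)] by blast
  fix a assume "a \<in> (\<lambda>m. Max ((\<lambda>l. BY D y l i) ` level D (per D m))) ` path D n"
  then obtain m where m: "m \<in> path D n" "a = Max ((\<lambda>l. BY D y l i) ` level D (per D m))"
    by blast
  have m_node: "m \<in> nodes D"
    using path_subset_nodes[OF assms(2)] m(1) by blast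
  have "Max ((\<lambda>l. BY D y l i) ` level D (per D m)) \<le> cumx D x m i"
  proof (rule Max.boundedI)
    show "finite ((\<lambda>l. BY D y l i) ` level D (per D m))"
      by (simp add: finite_level)
    show "(\<lambda>l. BY D y l i) ` level D (per D m) \<noteq> {}"
      using m_node unfolding level_def by blast
    fix b assume "b \<in> (\<lambda>l. BY D y l i) ` level D (per D m)"
    then obtain l where l: "l \<in> nodes D" "per D l = per D m" "b = BY D y l i"
      unfolding level_def by blast
    have "BY D y l i \<le> cumx D x l i"
      using feasible_capacity[OF assms(1) l(1) assms(3)] .
    also have "\<dots> = cumx D x m i"
      using cumx_eq_on_level[OF assms(1) l(1) m_node l(2) assms(3)] .
    finally show "b \<le> cumx D x m i"
      using l(3) by simp
  qed
  also have "\<dots> \<le> cumx D x n i"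
    using cumx_le_cumx_in_path[OF assms(2) m(1)] feasible_x_nonneg[OF assms(1) _ assms(3)] by blast
  finally show "a \<le> cumx D x n i"
    using m(2) by simp
qed

lemma obj_xTS_le:
  assumes "feasible D b True x y eta u"
  shows "obj D (xTS D y) y (etaTS D y u) u \<le> obj D x y eta u"
proof (rule obj_mono)
  fix n i assume "n \<in> nodes D" "i \<in> Fac D"
  then show "cumx D (xTS D y) n i \<le> cumx D x n i"
    using maxlev_le_cumx[OF assms] cumx_xTS by simp
next
  fix n assume n: "n \<in> nodes D" "per D n < Tp D"
  show "etaTS D y u n \<le> eta n"
    unfolding etaTS_def
  proof (rule etaOf_le[OF n])
    fix m assume "m \<in> children D n"
    then have m: "m \<in> nodes D" "m \<noteq> root D" "par D m = n"
      unfolding children_def by auto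
    have "stage_cost D (xTS D y) y m \<le> stage_cost D x y m"
      using maxlev_le_cumx[OF assms m(1)] cumx_xTS[OF m(1)] by (intro stage_cost_mono[OF m(1)]) simp
    then show "stage_cost D (xTS D y) y m - u m \<le> eta n"
      using feasible_risk[OF assms m(1,2)] m(3) by simp
  qed
qed

lemma obj_xTS_minus_obj_xMS:
  "obj D (xTS D y) y (etaTS D y u) u - obj D (xMS D y) y (etaMS D y u) u = LB1 D y u"
proof -
  have "obj D (xTS D y) y (etaTS D y u) u - obj D (xMS D y) y (etaMS D y u) u
      = (\<Sum>n\<in>nodes D. pr D n * (\<Sum>i\<in>Fac D. ftil D n i * (maxlev D y n i - maxceil D y n i)))
        + (\<Sum>n\<in>nodes D. pr D n * lamtil D n * (etaTS D y u n - etaMS D y u n))"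
    unfolding obj_diff sum.distrib[symmetric]
    by (intro sum.cong refl) (simp add: cumx_xTS cumx_xMS distrib_left mult.assoc)
  also have "(\<Sum>n\<in>nodes D. pr D n * (\<Sum>i\<in>Fac D. ftil D n i * (maxlev D y n i - maxceil D y n i)))
      = (\<Sum>i\<in>Fac D. fcost D (per D (root D)) i * (BY D y (root D) i - ceilBY D y (root D) i))
        + (\<Sum>n\<in>nodes D - {root D}. pr D n * (1 - lam D (per D n)) *
            (\<Sum>i\<in>Fac D. fcost D (per D n) i * (maxlev D y n i - maxceil D y n i)))"
    unfolding sum.remove[OF finite_nodes root_in_nodes]
    by (simp add: pr_root maxlev_root maxceil_root ftil_def sum_distrib_left mult.assoc)
  finally show ?thesis
    unfolding sum_pr_lamtil_nonleaves LB1_def .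
qed

end

theorem corollary1:
  fixes D :: "'v fl_data"
    and x :: "'v \<Rightarrow> nat \<Rightarrow> real" and y :: "'v \<Rightarrow> nat \<Rightarrow> nat \<Rightarrow> real"
    and eta :: "'v \<Rightarrow> real" and u :: "'v \<Rightarrow> real"
  assumes "valid_data D"
    and "feasible D False True x y eta u"
    and "\<forall>x' y' eta' u'. feasible D False True x' y' eta' u' \<longrightarrow>
           obj D x y eta u \<le> obj D x' y' eta' u'"
  shows "VMS D \<ge> LB1 D y u"
proof -
  interpret valid_instance D
    by unfold_locales (rule assms(1))
  have "obj D x y eta u \<le> zTS D"
    using LP_optimum_le_zTS[OF assms(2,3)] .
  moreover have "zMS D \<le> obj D (xMS D y) y (etaMS D y u) u"
    using zMS_le_obj[OF feasible_xMS[OF assms(2)]] .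
  moreover have "obj D (xTS D y) y (etaTS D y u) u \<le> obj D x y eta u"
    using obj_xTS_le[OF assms(2)] .
  ultimately show ?thesis
    unfolding VMS_def using obj_xTS_minus_obj_xMS[of y u] by linarith
qed

end
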